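(* Let $H$ be a real Hilbert space, $C\subseteq H$ a nonempty closed convex set with metric projection $P_C$, and $F\colon H\to H$ a mapping that is strongly monotone, i.e. there is $m>0$ with $\langle F(x)-F(y),x-y\rangle\ge m\|x-y\|^2$ for all $x,y\in H$, and Lipschitz continuous with constant $L>0$. Assume the variational inequality "find $x^*\in C$ with $\langle F(x^* ),x-x^*\rangle\ge 0$ for all $x\in C$" has a solution, and let $z$ denote its (unique) solution. Choose $x_0=y_0\in H$ and $\lambda\in\bigl(0,\frac{\sqrt2-1}{L}\bigr)$, and define for $n\ge0$ $$x_{n+1}=P_C(x_n-\lambda F(y_n)),\qquad y_{n+1}=2x_{n+1}-x_n.$$ Then $(x_n)$ converges to $z$ at least R-linearly, i.e. there exist $c>0$ and $q\in(0,1)$ such that $\|x_n-z\|\le c\,q^n$ for all $n$.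
   Context: $P_C(x)$ denotes the unique nearest point of $C$ to $x$. *)

theory Defs
  imports "HOL-Analysis.Analysis"
begin

definition metric_proj :: "'a::real_inner set \<Rightarrow> 'a \<Rightarrow> 'a" where
  "metric_proj C x = (THE p. p \<in> C \<and> (\<forall>u\<in>C. dist x p \<le> dist x u))"

end

theory Submission
  imports Defs
begin

text \<open>
  In a Hilbert space the projection onto a nonempty closed convex set exists because the
  parallelogram law makes every minimising sequence Cauchy; it is characterised by the
  obtuse-angle inequality \<open>\<langle>w - P w, u - P w\<rangle> \<le> 0\<close> for \<open>u \<in> C\<close>.
  Using this inequality three times per step, together with strong monotonicity, the Lipschitz
  bound and Young's inequality with weight \<open>s = sqrt (1 - 2 \<lambda> L)\<close>, the energy
  \<open>E n = \<parallel>x (n+1) - z\<parallel>\<^sup>2 + 2 \<lambda> \<langle>F z, x n - z\<rangle> + \<lambda> L \<parallel>x (n+1) - y n\<parallel>\<^sup>2\<close>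
  decreases by a dissipation term that dominates a fixed multiple of \<open>E (n+1)\<close>.
  The condition \<open>\<lambda> L < sqrt 2 - 1\<close> is exactly \<open>\<lambda> L < s\<close>, which makes all coefficients of the
  dissipation positive. Hence \<open>E\<close> decays geometrically, and so does \<open>\<parallel>x (n+1) - z\<parallel>\<^sup>2 \<le> E n\<close>.
\<close>

lemma parallelogram_law:
  fixes a b :: "'a::real_inner"
  shows "(norm (a + b))\<^sup>2 + (norm (a - b))\<^sup>2 = 2 * (norm a)\<^sup>2 + 2 * (norm b)\<^sup>2"
  by (simp add: power2_norm_eq_inner inner_add_left inner_add_right inner_diff_left
      inner_diff_right inner_commute)

lemma minimizing_sequence_Cauchy:
  fixes C :: "'a::real_inner set"
  assumes "convex C" and u_in: "\<And>k. u k \<in> C"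
    and u_lim: "(\<lambda>k. dist w (u k)) \<longlonglongrightarrow> infdist w C"
  shows "Cauchy u"
proof -
  define d where "d = infdist w C"
  define g where "g k = (dist w (u k))\<^sup>2 - d\<^sup>2" for k
  have "g \<longlonglongrightarrow> d\<^sup>2 - d\<^sup>2"
    unfolding g_def d_def by (intro tendsto_intros u_lim)
  hence g_lim: "g \<longlonglongrightarrow> 0" by simp
  have bound: "(dist (u i) (u j))\<^sup>2 \<le> 2 * g i + 2 * g j" for i j
  proof -
    have "closed_segment (u i) (u j) \<subseteq> C"
      using assms(1) u_in by (simp add: convex_contains_segment)
    hence "midpoint (u i) (u j) \<in> C" by auto
    hence "d \<le> dist w (midpoint (u i) (u j))"
      unfolding d_def by (rule infdist_le)
    hence "d\<^sup>2 \<le> (norm (w - midpoint (u i) (u j)))\<^sup>2"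
      using infdist_nonneg[of w C] by (simp add: d_def dist_norm power_mono)
    moreover have "(w - u i) + (w - u j) = 2 *\<^sub>R (w - midpoint (u i) (u j))"
      by (simp add: midpoint_def algebra_simps scaleR_2)
    moreover have "(w - u i) - (w - u j) = u j - u i" by simp
    ultimately show ?thesis
      using parallelogram_law[of "w - u i" "w - u j"]
      by (simp add: g_def dist_norm norm_minus_commute power_mult_distrib)
  qed
  show "Cauchy u"
  proof (rule metric_CauchyI)
    fix e :: real
    assume "e > 0"
    then obtain N where N: "\<And>k. k \<ge> N \<Longrightarrow> \<bar>g k\<bar> < e\<^sup>2 / 4"
      using LIMSEQ_D[OF g_lim, of "e\<^sup>2 / 4"] by auto
    have "dist (u i) (u j) < e" if "i \<ge> N" "j \<ge> N" for i j
    proof -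
      have "(dist (u i) (u j))\<^sup>2 < e\<^sup>2"
        using bound[of i j] N[OF that(1)] N[OF that(2)] by linarith
      thus ?thesis using \<open>e > 0\<close> by (simp add: power_less_imp_less_base)
    qed
    thus "\<exists>M. \<forall>i\<ge>M. \<forall>j\<ge>M. dist (u i) (u j) < e" by blast
  qed
qed

lemma closest_point_exists_complete:
  fixes C :: "'a::{real_inner,complete_space} set"
  assumes "C \<noteq> {}" "closed C" "convex C"
  obtains p where "p \<in> C" "\<forall>u\<in>C. dist w p \<le> dist w u"
proof -
  have "\<exists>u\<in>C. dist w u < infdist w C + 1 / Suc k" for k
  proof -
    have "(INF u\<in>C. dist w u) < infdist w C + 1 / Suc k"
      using infdist_notempty[OF assms(1)] by simp
    thus ?thesis by (simp add: cINF_less_iff[OF assms(1) bdd_below_image_dist])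
  qed
  then obtain u where u_in: "\<And>k. u k \<in> C"
    and u_less: "\<And>k. dist w (u k) < infdist w C + 1 / Suc k"
    by metis
  have lim: "(\<lambda>k. dist w (u k)) \<longlonglongrightarrow> infdist w C"
  proof (rule tendsto_sandwich)
    show "\<forall>\<^sub>F k in sequentially. infdist w C \<le> dist w (u k)"
      by (intro always_eventually allI infdist_le u_in)
    show "\<forall>\<^sub>F k in sequentially. dist w (u k) \<le> infdist w C + 1 / Suc k"
      by (intro always_eventually allI less_imp_le u_less)
    have "(\<lambda>k. infdist w C + 1 / Suc k) \<longlonglongrightarrow> infdist w C + 0"
      by (intro tendsto_intros LIMSEQ_Suc[OF lim_inverse_n'])
    thus "(\<lambda>k. infdist w C + 1 / Suc k) \<longlonglongrightarrow> infdist w C" by simp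
  qed simp
  obtain p where p: "u \<longlonglongrightarrow> p"
    using Cauchy_convergent[OF minimizing_sequence_Cauchy[OF assms(3) u_in lim]]
    by (auto simp: convergent_def)
  have "p \<in> C" using closed_sequentially[OF assms(2) u_in p] .
  moreover have "dist w p = infdist w C"
    using tendsto_unique[OF _ tendsto_dist[OF tendsto_const p] lim] by simp
  ultimately show ?thesis using infdist_le[of _ C w] by (intro that) auto
qed

lemma metric_proj_closest:
  fixes C :: "'a::{real_inner,complete_space} set"
  assumes "C \<noteq> {}" "closed C" "convex C"
  shows "metric_proj C w \<in> C \<and> (\<forall>u\<in>C. dist w (metric_proj C w) \<le> dist w u)"
proof -
  obtain p where p: "p \<in> C" "\<forall>u\<in>C. dist w p \<le> dist w u"
    using closest_point_exists_complete[OF assms] .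
  have "metric_proj C w = p"
    unfolding metric_proj_def
    using p any_closest_point_unique[OF assms(3,2)] by (intro the_equality) blast+
  with p show ?thesis by simp
qed

lemma metric_proj_in:
  fixes C :: "'a::{real_inner,complete_space} set"
  assumes "C \<noteq> {}" "closed C" "convex C"
  shows "metric_proj C w \<in> C"
  using metric_proj_closest[OF assms] by blast

lemma metric_proj_inner_le:
  fixes C :: "'a::{real_inner,complete_space} set"
  assumes "C \<noteq> {}" "closed C" "convex C" "u \<in> C"
  shows "inner (w - metric_proj C w) (u - metric_proj C w) \<le> 0"
  using metric_proj_closest[OF assms(1-3)] any_closest_point_dot[OF assms(3,2) _ assms(4)]
  by blast

lemma weighted_sum_squares_bound:
  fixes a b s :: real
  assumes "s > 0"
  shows "2 * a * b \<le> a\<^sup>2 / s + s * b\<^sup>2"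
proof -
  have "0 \<le> (a - s * b)\<^sup>2 / s" using assms by simp
  also have "\<dots> = a\<^sup>2 / s + s * b\<^sup>2 - 2 * a * b"
    using assms by (simp add: power2_eq_square field_simps)
  finally show ?thesis by simp
qed

lemma projection_inequality_distance:
  fixes a b p z :: "'a::real_inner"
  assumes "inner (a - b - p) (z - p) \<le> 0"
  shows "(norm (p - z))\<^sup>2 \<le> (norm (a - z))\<^sup>2 - (norm (p - a))\<^sup>2 + 2 * inner b (z - p)"
proof -
  have "2 * inner (a - p) (z - p) = (norm (a - p))\<^sup>2 + (norm (z - p))\<^sup>2 - (norm (a - z))\<^sup>2"
    using dot_norm_neg[of "a - p" "z - p"] by simp
  moreover have "inner (a - b - p) (z - p) = inner (a - p) (z - p) - inner b (z - p)"
    by (simp add: inner_diff_left)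
  ultimately show ?thesis
    using assms by (simp add: norm_minus_commute)
qed

lemma reflection_inequality:
  fixes x0 x1 x2 b :: "'a::real_inner"
  assumes "inner (x0 - b - x1) (x2 - x1) \<le> 0" and "inner (x0 - b - x1) (x0 - x1) \<le> 0"
  shows "(norm (x1 - x0))\<^sup>2 - (norm (x2 - x1))\<^sup>2 + (norm (x2 - (2 *\<^sub>R x1 - x0)))\<^sup>2
    \<le> 2 * inner b (x2 - (2 *\<^sub>R x1 - x0))"
proof -
  have split: "x2 - (2 *\<^sub>R x1 - x0) = (x2 - x1) + (x0 - x1)"
    by (simp add: algebra_simps scaleR_2)
  have "inner (x0 - b - x1) (x2 - (2 *\<^sub>R x1 - x0)) \<le> 0"
    using assms unfolding split inner_add_right by linarith
  moreover have "2 * inner (x0 - x1) (x2 - (2 *\<^sub>R x1 - x0))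
      = (norm (x1 - x0))\<^sup>2 - (norm (x2 - x1))\<^sup>2 + (norm (x2 - (2 *\<^sub>R x1 - x0)))\<^sup>2"
    unfolding split
    by (simp add: power2_norm_eq_inner inner_add_left inner_add_right inner_diff_left
        inner_diff_right inner_commute)
  ultimately show ?thesis
    by (simp add: inner_diff_left)
qed

lemma lipschitz_cross_term_bound:
  fixes g e a c :: "'a::real_inner" and L s :: real
  assumes "norm g \<le> L * norm (a + c)" and "L \<ge> 0" and "s > 0"
  shows "2 * inner g e \<le> L * ((norm a)\<^sup>2 / s + s * (norm e)\<^sup>2) + L * ((norm c)\<^sup>2 + (norm e)\<^sup>2)"
proof -
  have "2 * inner g e \<le> 2 * (norm g * norm e)"
    using norm_cauchy_schwarz[of g e] by simp
  also have "\<dots> \<le> 2 * (L * (norm a + norm c) * norm e)"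
    using assms(1,2) norm_triangle_ineq[of a c]
    by (intro mult_left_mono mult_right_mono order.trans[OF assms(1)]) auto
  also have "\<dots> = L * (2 * norm a * norm e) + L * (2 * norm c * norm e)"
    by (simp add: algebra_simps)
  also have "\<dots> \<le> L * ((norm a)\<^sup>2 / s + s * (norm e)\<^sup>2) + L * ((norm c)\<^sup>2 + (norm e)\<^sup>2)"
    using assms(2) weighted_sum_squares_bound[OF assms(3)] sum_squares_bound
    by (intro add_mono mult_left_mono) auto
  finally show ?thesis .
qed

lemma projected_reflected_gradient_step:
  fixes x0 x1 x2 y0 y1 z :: "'a::real_inner" and F :: "'a \<Rightarrow> 'a" and lam L m s :: real
  assumes proj_next: "inner (x1 - lam *\<^sub>R F y1 - x2) (z - x2) \<le> 0"
    and proj_curr_next: "inner (x0 - lam *\<^sub>R F y0 - x1) (x2 - x1) \<le> 0"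
    and proj_curr_prev: "inner (x0 - lam *\<^sub>R F y0 - x1) (x0 - x1) \<le> 0"
    and y1: "y1 = 2 *\<^sub>R x1 - x0"
    and monotone: "inner (F y1 - F z) (y1 - z) \<ge> m * (norm (y1 - z))\<^sup>2"
    and lipschitz: "norm (F y1 - F y0) \<le> L * norm (y1 - y0)"
    and "lam > 0" "L \<ge> 0" "s > 0"
  shows "(norm (x2 - z))\<^sup>2 + 2 * lam * inner (F z) (x1 - z) + lam * L * (norm (x2 - y1))\<^sup>2
    \<le> (norm (x1 - z))\<^sup>2 + 2 * lam * inner (F z) (x0 - z) + lam * L * (norm (x1 - y0))\<^sup>2
      - (1 - lam * L / s) * (norm (x1 - x0))\<^sup>2
      - (1 - lam * L * s - 2 * lam * L) * (norm (x2 - y1))\<^sup>2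
      - 2 * lam * inner (F z) (x1 - z) - 2 * lam * m * (norm (y1 - z))\<^sup>2"
proof -
  have distance: "(norm (x2 - z))\<^sup>2
      \<le> (norm (x1 - z))\<^sup>2 - (norm (x2 - x1))\<^sup>2 + 2 * lam * inner (F y1) (z - x2)"
    using projection_inequality_distance[OF proj_next] by simp
  have reflection: "(norm (x1 - x0))\<^sup>2 - (norm (x2 - x1))\<^sup>2 + (norm (x2 - y1))\<^sup>2
      \<le> 2 * lam * inner (F y0) (x2 - y1)"
    using reflection_inequality[OF proj_curr_next proj_curr_prev] y1 by simp
  have "y1 - y0 = (x1 - x0) + (x1 - y0)"
    using y1 by (simp add: algebra_simps scaleR_2)
  with lipschitz have "norm (F y1 - F y0) \<le> L * norm ((x1 - x0) + (x1 - y0))"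
    by simp
  from lipschitz_cross_term_bound[OF this \<open>L \<ge> 0\<close> \<open>s > 0\<close>, of "y1 - x2"]
  have "2 * lam * inner (F y1 - F y0) (y1 - x2) \<le> lam * (L * ((norm (x1 - x0))\<^sup>2 / s
      + s * (norm (x2 - y1))\<^sup>2) + L * ((norm (x1 - y0))\<^sup>2 + (norm (x2 - y1))\<^sup>2))"
    using \<open>lam > 0\<close> by (simp add: norm_minus_commute)
  hence cross: "2 * lam * inner (F y1 - F y0) (y1 - x2)
      \<le> lam * L / s * (norm (x1 - x0))\<^sup>2 + (lam * L * s + lam * L) * (norm (x2 - y1))\<^sup>2
        + lam * L * (norm (x1 - y0))\<^sup>2"
    by (simp add: algebra_simps)
  have "inner (F y1) (z - y1) = - inner (F y1 - F z) (y1 - z) - inner (F z) (y1 - z)"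
    by (simp add: inner_diff_left inner_diff_right)
  also have "inner (F z) (y1 - z) = 2 * inner (F z) (x1 - z) - inner (F z) (x0 - z)"
    unfolding y1 by (simp add: inner_diff_right scaleR_2 inner_add_right)
  finally have "inner (F y1) (z - y1)
      \<le> - m * (norm (y1 - z))\<^sup>2 - 2 * inner (F z) (x1 - z) + inner (F z) (x0 - z)"
    using monotone by simp
  hence "2 * lam * inner (F y1) (z - y1)
      \<le> 2 * lam * (- m * (norm (y1 - z))\<^sup>2 - 2 * inner (F z) (x1 - z) + inner (F z) (x0 - z))"
    using \<open>lam > 0\<close> by (simp add: mult_left_mono)
  hence mono: "2 * lam * inner (F y1) (z - y1) \<le> - 2 * lam * m * (norm (y1 - z))\<^sup>2
      - 4 * lam * inner (F z) (x1 - z) + 2 * lam * inner (F z) (x0 - z)"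
    by (simp add: algebra_simps)
  have "inner (F y1) (z - x2) + inner (F y0) (x2 - y1)
      = inner (F y1) (z - y1) + inner (F y1 - F y0) (y1 - x2)"
    by (simp add: inner_diff_left inner_diff_right)
  hence "2 * lam * inner (F y1) (z - x2) + 2 * lam * inner (F y0) (x2 - y1)
      = 2 * lam * inner (F y1) (z - y1) + 2 * lam * inner (F y1 - F y0) (y1 - x2)"
    by (metis distrib_left)
  with distance reflection cross mono show ?thesis
    by (simp add: algebra_simps)
qed

lemma stepsize_margin:
  fixes r :: real
  assumes "0 < r" and "r < sqrt 2 - 1"
  shows "0 < 1 - 2 * r" and "r < sqrt (1 - 2 * r)"
proof -
  have "(r + 1)\<^sup>2 < (sqrt 2)\<^sup>2"
    using assms by (intro power_strict_mono) auto
  hence less: "r\<^sup>2 < 1 - 2 * r" by (simp add: power2_eq_square algebra_simps)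
  moreover have "0 < r\<^sup>2" using assms(1) by simp
  ultimately show "0 < 1 - 2 * r" by linarith
  show "r < sqrt (1 - 2 * r)"
    using real_sqrt_less_mono[OF less] assms(1) by simp
qed

lemma geometric_decay_of_dissipation:
  fixes W D :: "nat \<Rightarrow> real" and K :: real
  assumes "K > 0"
    and decrease: "\<And>k. W (Suc k) \<le> W k - D k"
    and dominated: "\<And>k. W (Suc k) \<le> K * D k"
  shows "W k \<le> (K / (K + 1)) ^ k * W 0"
proof (induction k)
  case (Suc k)
  have "(K + 1) * W (Suc k) \<le> K * W k"
    using mult_left_mono[OF decrease[of k], of K] dominated[of k] \<open>K > 0\<close>
    by (simp add: algebra_simps)
  hence "W (Suc k) \<le> K / (K + 1) * W k"
    using \<open>K > 0\<close> by (simp add: field_simps)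
  also have "\<dots> \<le> K / (K + 1) * ((K / (K + 1)) ^ k * W 0)"
    using Suc.IH \<open>K > 0\<close> by (intro mult_left_mono) auto
  finally show ?case by simp
qed simp

lemma geometric_bound_from_tail:
  fixes a :: "nat \<Rightarrow> real"
  assumes "q > 0" and tail: "\<And>k. a (k + N) \<le> c * q ^ k"
  shows "\<exists>c'>0. \<forall>n. a n \<le> c' * q ^ n"
proof (intro exI conjI allI)
  define c' where "c' = (\<Sum>i<N. \<bar>a i\<bar> / q ^ i) + \<bar>c\<bar> / q ^ N + 1"
  have head: "\<bar>a i\<bar> / q ^ i \<le> (\<Sum>i<N. \<bar>a i\<bar> / q ^ i)" if "i < N" for i
    using that \<open>q > 0\<close> by (intro member_le_sum) auto
  have sum_nonneg: "0 \<le> (\<Sum>i<N. \<bar>a i\<bar> / q ^ i)"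
    using \<open>q > 0\<close> by (intro sum_nonneg) auto
  have c_nonneg: "0 \<le> \<bar>c\<bar> / q ^ N" using \<open>q > 0\<close> by simp
  show "c' > 0"
    unfolding c'_def using sum_nonneg \<open>q > 0\<close> by (simp add: add_nonneg_pos)
  fix n
  show "a n \<le> c' * q ^ n"
  proof (cases "n < N")
    case True
    have "a n \<le> \<bar>a n\<bar> / q ^ n * q ^ n" using \<open>q > 0\<close> by simp
    also have "\<dots> \<le> c' * q ^ n"
    proof (rule mult_right_mono)
      show "\<bar>a n\<bar> / q ^ n \<le> c'"
        unfolding c'_def using head[OF True] c_nonneg by linarith
    qed (use \<open>q > 0\<close> in simp)
    finally show ?thesis .
  next
    case False
    hence "a n \<le> c * q ^ (n - N)" using tail[of "n - N"] by simp
    also have "\<dots> = c / q ^ N * q ^ n"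
      using False \<open>q > 0\<close> by (simp add: power_diff)
    also have "\<dots> \<le> \<bar>c\<bar> / q ^ N * q ^ n"
      using \<open>q > 0\<close> by (intro mult_right_mono divide_right_mono) auto
    also have "\<dots> \<le> c' * q ^ n"
      unfolding c'_def using sum_nonneg \<open>q > 0\<close> by (intro mult_right_mono) auto
    finally show ?thesis .
  qed
qed

locale projected_reflected_gradient =
  fixes C :: "'a::{real_inner,complete_space} set" and F :: "'a \<Rightarrow> 'a"
    and m L lam :: real and x y :: "nat \<Rightarrow> 'a" and z :: 'a
  assumes C_nonempty: "C \<noteq> {}" and C_closed: "closed C" and C_convex: "convex C"
    and m_pos: "m > 0"
    and strongly_monotone: "\<And>u v. inner (F u - F v) (u - v) \<ge> m * (norm (u - v))\<^sup>2"
    and L_pos: "L > 0"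
    and lipschitz: "\<And>u v. norm (F u - F v) \<le> L * norm (u - v)"
    and z_in_C: "z \<in> C" and z_solves: "\<And>u. u \<in> C \<Longrightarrow> inner (F z) (u - z) \<ge> 0"
    and lam_pos: "lam > 0" and stepsize: "lam * L < sqrt 2 - 1"
    and x_Suc: "\<And>n. x (Suc n) = metric_proj C (x n - lam *\<^sub>R F (y n))"
    and y_Suc: "\<And>n. y (Suc n) = 2 *\<^sub>R x (Suc n) - x n"
begin

lemma x_Suc_in_C: "x (Suc n) \<in> C"
  unfolding x_Suc by (rule metric_proj_in[OF C_nonempty C_closed C_convex])

lemma x_Suc_inner_le:
  "u \<in> C \<Longrightarrow> inner (x n - lam *\<^sub>R F (y n) - x (Suc n)) (u - x (Suc n)) \<le> 0"
  unfolding x_Suc by (rule metric_proj_inner_le[OF C_nonempty C_closed C_convex])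

lemma variational_inequality_iterate: "0 \<le> inner (F z) (x (Suc n) - z)"
  using z_solves[OF x_Suc_in_C] .

definition s :: real where "s = sqrt (1 - 2 * (lam * L))"

lemma s_pos: "s > 0" and lam_L_less_s: "lam * L < s"
  using stepsize_margin[OF _ stepsize] lam_pos L_pos unfolding s_def by auto

definition energy :: "nat \<Rightarrow> real" where
  "energy n = (norm (x (Suc n) - z))\<^sup>2 + 2 * lam * inner (F z) (x n - z)
    + lam * L * (norm (x (Suc n) - y n))\<^sup>2"

definition dissipation :: "nat \<Rightarrow> real" where
  "dissipation n = s * (s - lam * L) * (norm (x (Suc (Suc n)) - y (Suc n)))\<^sup>2
    + 2 * lam * inner (F z) (x (Suc n) - z) + 2 * lam * m * (norm (y (Suc n) - z))\<^sup>2"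

lemma energy_decrease:
  assumes "n \<ge> 1"
  shows "energy (Suc n) \<le> energy n - dissipation n"
proof -
  have x_n_in_C: "x n \<in> C"
    using assms x_Suc_in_C[of "n - 1"] by simp
  note step = projected_reflected_gradient_step[OF
      x_Suc_inner_le[OF z_in_C, where n = "Suc n"]
      x_Suc_inner_le[OF x_Suc_in_C[where n = "Suc n"], where n = n]
      x_Suc_inner_le[OF x_n_in_C, where n = n]
      y_Suc[of n] strongly_monotone lipschitz lam_pos less_imp_le[OF L_pos] s_pos]
  have "0 \<le> (1 - lam * L / s) * (norm (x (Suc n) - x n))\<^sup>2"
    using lam_L_less_s s_pos by simp
  moreover have "1 - lam * L * s - 2 * lam * L = s * (s - lam * L)"
    using stepsize_margin(1)[OF _ stepsize] lam_pos L_pos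
    by (simp add: s_def power2_eq_square algebra_simps)
  ultimately show ?thesis
    using step unfolding energy_def dissipation_def by simp
qed

lemma energy_le_dissipation: "\<exists>K>0. \<forall>n. energy (Suc n) \<le> K * dissipation n"
proof (intro exI conjI allI)
  define K where "K = (2 + lam * L) / (s * (s - lam * L)) + 1 / (lam * m) + 1"
  have margin: "s * (s - lam * L) > 0" using s_pos lam_L_less_s by simp
  have "(2 + lam * L) / (s * (s - lam * L)) \<le> K" "1 / (lam * m) \<le> K" "1 \<le> K"
    using margin lam_pos m_pos L_pos by (auto simp: K_def)
  hence K_ge: "2 + lam * L \<le> K * (s * (s - lam * L))" "1 \<le> K * (lam * m)" "1 \<le> K"
    using margin lam_pos m_pos by (simp_all add: pos_divide_le_eq)
  thus "K > 0" by simp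
  fix n
  let ?E = "norm (x (Suc (Suc n)) - y (Suc n))" and ?Y = "norm (y (Suc n) - z)"
  have "norm (x (Suc (Suc n)) - z) \<le> ?E + ?Y"
    using norm_triangle_ineq[of "x (Suc (Suc n)) - y (Suc n)" "y (Suc n) - z"] by simp
  hence "(norm (x (Suc (Suc n)) - z))\<^sup>2 \<le> (?E + ?Y)\<^sup>2" by (simp add: power_mono)
  also have "\<dots> \<le> 2 * ?E\<^sup>2 + 2 * ?Y\<^sup>2"
    using sum_squares_bound[of ?E ?Y] by (simp add: power2_sum)
  finally have "energy (Suc n)
      \<le> (2 + lam * L) * ?E\<^sup>2 + 2 * ?Y\<^sup>2 + 2 * lam * inner (F z) (x (Suc n) - z)"
    unfolding energy_def by (simp add: algebra_simps)
  also have "\<dots> \<le> K * (s * (s - lam * L)) * ?E\<^sup>2 + K * (lam * m) * (2 * ?Y\<^sup>2)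
      + K * (2 * lam * inner (F z) (x (Suc n) - z))"
  proof -
    have "0 \<le> 2 * lam * inner (F z) (x (Suc n) - z)"
      using variational_inequality_iterate[of n] lam_pos by simp
    thus ?thesis
      using mult_right_mono[OF K_ge(1), of "?E\<^sup>2"] mult_right_mono[OF K_ge(2), of "2 * ?Y\<^sup>2"]
        mult_right_mono[OF K_ge(3)]
      by (simp add: add_mono)
  qed
  finally show "energy (Suc n) \<le> K * dissipation n"
    unfolding dissipation_def by (simp add: algebra_simps)
qed

lemma distance_tail_geometric:
  "\<exists>c q. 0 < q \<and> q < 1 \<and> (\<forall>k. norm (x (k + 2) - z) \<le> c * q ^ k)"
proof -
  obtain K where "K > 0" and dominated: "\<And>n. energy (Suc n) \<le> K * dissipation n"
    using energy_le_dissipation by blast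
  define q where "q = K / (K + 1)"
  have q: "0 < q" "q < 1" using \<open>K > 0\<close> by (simp_all add: q_def)
  have decay: "energy (Suc k) \<le> q ^ k * energy 1" for k
    using geometric_decay_of_dissipation[of K "\<lambda>k. energy (Suc k)" "\<lambda>k. dissipation (Suc k)"]
      \<open>K > 0\<close> energy_decrease dominated
    unfolding q_def by auto
  have "norm (x (k + 2) - z) \<le> sqrt (max 0 (energy 1)) * sqrt q ^ k" for k
  proof -
    have "(norm (x (k + 2) - z))\<^sup>2 \<le> energy (Suc k)"
      unfolding energy_def using variational_inequality_iterate[of k] lam_pos L_pos by simp
    also have "\<dots> \<le> q ^ k * max 0 (energy 1)"
      using decay[of k] q by (smt (verit) mult_left_mono zero_le_power)
    finally have "norm (x (k + 2) - z) \<le> sqrt (q ^ k * max 0 (energy 1))"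
      by (rule real_le_rsqrt)
    thus ?thesis by (simp add: real_sqrt_mult real_sqrt_power mult.commute)
  qed
  thus ?thesis
    using q by (intro exI[of _ "sqrt (max 0 (energy 1))"] exI[of _ "sqrt q"]) auto
qed

end

theorem theorem3p4:
  fixes C :: "'a::{real_inner, complete_space} set"
    and F :: "'a \<Rightarrow> 'a"
    and m L lam :: real
    and x y :: "nat \<Rightarrow> 'a"
    and z :: 'a
  assumes "C \<noteq> {}" and "closed C" and "convex C"
    and "m > 0"
    and "\<And>u v. inner (F u - F v) (u - v) \<ge> m * (norm (u - v))\<^sup>2"
    and "L > 0"
    and "\<And>u v. norm (F u - F v) \<le> L * norm (u - v)"
    and "z \<in> C" and "\<And>u. u \<in> C \<Longrightarrow> inner (F z) (u - z) \<ge> 0"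
    and "0 < lam" and "lam < (sqrt 2 - 1) / L"
    and "x 0 = y 0"
    and "\<And>n. x (Suc n) = metric_proj C (x n - lam *\<^sub>R F (y n))"
    and "\<And>n. y (Suc n) = 2 *\<^sub>R x (Suc n) - x n"
  shows "\<exists>c q. c > 0 \<and> 0 < q \<and> q < 1 \<and> (\<forall>n. norm (x n - z) \<le> c * q ^ n)"
proof -
  have "lam * L < sqrt 2 - 1"
    using assms(6,11) by (simp add: pos_less_divide_eq)
  then interpret projected_reflected_gradient C F m L lam x y z
    using assms by unfold_locales auto
  obtain c q where q: "0 < q" "q < 1" and tail: "\<And>k. norm (x (k + 2) - z) \<le> c * q ^ k"
    using distance_tail_geometric by blast
  from geometric_bound_from_tail[OF \<open>0 < q\<close> tail]
  show ?thesis using q by blast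
qed

end
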